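(* Let $\mathrm x$ be a binary word of length $m<\Bbbk-1$. Then, as operators on $\widetilde{\mathcal H}=\mathcal H\oplus P'_{[\![1]\!]}\mathcal H$, $$\widetilde U_\theta^*\,(P_{[\![\mathrm x]\!]}\oplus0)\,\widetilde U_\theta=P_{[\![0]\!]}P_{\bar T^{-1}[\![\mathrm x]\!]}\oplus P'_{[\![1]\!]}P_{\bar T^{-1}[\![\mathrm x]\!]},$$ $$\widetilde U_\theta^*\,(0\oplus P'_{[\![1]\!]}P_{[\![\mathrm x]\!]})\,\widetilde U_\theta=P_{[\![1]\!]}P_{\bar T^{-1}[\![\mathrm x]\!]}\oplus0 .$$
   Context: Let $\Bbbk\geq3$ and $\mathcal H=(\mathbb C^2)^{\otimes\Bbbk}$ with orthonormal basis $|\mathrm y\rangle=|\mathrm y_1\rangle\otimes\cdots\otimes|\mathrm y_\Bbbk\rangle$, $\mathrm y_i\in\{0,1\}$. For a binary word $\mathrm w=\mathrm w_1\dots\mathrm w_m$ ($m\leq\Bbbk$), $P_{[\![\mathrm w]\!]}$ is the orthogonal projection onto the span of the $|\mathrm y\rangle$ with $\mathrm y_1\dots\mathrm y_m=\mathrm w$; $[\![\mathrm w]\!]\subset[0,1]$ is the dyadic cylinder of points whose first $m$ binary digits are $\mathrm w$. $\bar T(x)=2x\bmod1$, so $\bar T^{-n}[\![\mathrm w]\!]=\bigcup_{|\mathrm y|=n}[\![\mathrm y\mathrm w]\!]$, and $P_{\bar T^{-n}[\![\mathrm w]\!]}=\sum_{|\mathrm y|=n}P_{[\![\mathrm y\mathrm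 w]\!]}$. Let $\mathbf U$ be a $2\times2$ unitary with all entries of modulus $2^{-1/2}$, $\bar U|\mathrm y\rangle=|\mathrm y_2\rangle\otimes\cdots\otimes|\mathrm y_\Bbbk\rangle\otimes\mathbf U|\mathrm y_1\rangle$, $\sigma$ the unitary exchanging the last two tensor factors, and $P'_{[\![j]\!]}=\bar UP_{[\![j]\!]}\bar U^*$ for $j\in\{0,1\}$. Tower space $\widetilde{\mathcal H}=\mathcal H\oplus P'_{[\![1]\!]}\mathcal H$ with the direct-sum scalar product, and $\widetilde U_\theta(\phi_0,\phi_1)=\big(\sigma\bar UP'_{[\![1]\!]}\phi_1+\bar UP_{[\![0]\!]}\phi_0,\ e^{i\theta}\bar UP_{[\![1]\!]}\phi_0\big)$, $\theta\in\mathbb R$. *)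

theory Defs
  imports Complex_Main
begin

text \<open>Binary words are \<open>bool list\<close> (True = digit 1, False = digit 0).
  A vector of \<open>H = (C^2)^{\<otimes>k}\<close> is a function \<open>bool list \<Rightarrow> complex\<close>
  giving the coordinates in the basis \<open>|y\<rangle>\<close>, \<open>length y = k\<close>, and vanishing elsewhere.\<close>

definition words :: "nat \<Rightarrow> bool list set" where
  "words n = {y. length y = n}"

definition Hsp :: "nat \<Rightarrow> (bool list \<Rightarrow> complex) set" where
  "Hsp k = {\<phi>. \<forall>y. length y \<noteq> k \<longrightarrow> \<phi> y = 0}"

definition hinner :: "nat \<Rightarrow> (bool list \<Rightarrow> complex) \<Rightarrow> (bool list \<Rightarrow> complex) \<Rightarrow> complex" where
  "hinner k \<phi> \<psi> = (\<Sum>y\<in>words k. cnj (\<phi> y) * \<psi> y)"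

definition Pcyl :: "bool list \<Rightarrow> (bool list \<Rightarrow> complex) \<Rightarrow> (bool list \<Rightarrow> complex)" where
  "Pcyl w \<phi> = (\<lambda>y. if take (length w) y = w then \<phi> y else 0)"

definition PTinv :: "nat \<Rightarrow> bool list \<Rightarrow> (bool list \<Rightarrow> complex) \<Rightarrow> (bool list \<Rightarrow> complex)" where
  "PTinv n w \<phi> = (\<lambda>z. \<Sum>y\<in>words n. Pcyl (y @ w) \<phi> z)"

text \<open>A \<open>2\<times>2\<close> matrix \<open>U :: bool \<Rightarrow> bool \<Rightarrow> complex\<close>, \<open>U i j = \<langle>i|U|j\<rangle>\<close>.\<close>
definition unitary2 :: "(bool \<Rightarrow> bool \<Rightarrow> complex) \<Rightarrow> bool" where
  "unitary2 U \<longleftrightarrow> (\<forall>i j. (\<Sum>l\<in>UNIV. cnj (U l i) * U l j) = (if i = j then 1 else 0))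
                  \<and> (\<forall>i j. (\<Sum>l\<in>UNIV. U i l * cnj (U j l)) = (if i = j then 1 else 0))"

text \<open>matrix entry \<open>\<langle>z|Ubar|y\<rangle>\<close> of \<open>Ubar|y\<rangle> = |y_2..y_k\<rangle> \<otimes> U|y_1\<rangle>\<close>\<close>
definition Ubar_ent :: "nat \<Rightarrow> (bool \<Rightarrow> bool \<Rightarrow> complex) \<Rightarrow> bool list \<Rightarrow> bool list \<Rightarrow> complex" where
  "Ubar_ent k U z y =
     (if length z = k \<and> length y = k \<and> butlast z = tl y then U (last z) (hd y) else 0)"

definition Ubar :: "nat \<Rightarrow> (bool \<Rightarrow> bool \<Rightarrow> complex) \<Rightarrow> (bool list \<Rightarrow> complex) \<Rightarrow> (bool list \<Rightarrow> complex)" where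
  "Ubar k U \<phi> = (\<lambda>z. \<Sum>y\<in>words k. Ubar_ent k U z y * \<phi> y)"

definition Ubar_adj :: "nat \<Rightarrow> (bool \<Rightarrow> bool \<Rightarrow> complex) \<Rightarrow> (bool list \<Rightarrow> complex) \<Rightarrow> (bool list \<Rightarrow> complex)" where
  "Ubar_adj k U \<phi> = (\<lambda>y. \<Sum>z\<in>words k. cnj (Ubar_ent k U z y) * \<phi> z)"

definition Pprime :: "nat \<Rightarrow> (bool \<Rightarrow> bool \<Rightarrow> complex) \<Rightarrow> bool \<Rightarrow> (bool list \<Rightarrow> complex) \<Rightarrow> (bool list \<Rightarrow> complex)" where
  "Pprime k U j \<phi> = Ubar k U (Pcyl [j] (Ubar_adj k U \<phi>))"

definition swap_last2 :: "bool list \<Rightarrow> bool list" where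
  "swap_last2 z = butlast (butlast z) @ [last z, last (butlast z)]"

definition sigma :: "nat \<Rightarrow> (bool list \<Rightarrow> complex) \<Rightarrow> (bool list \<Rightarrow> complex)" where
  "sigma k \<phi> = (\<lambda>z. if length z = k then \<phi> (swap_last2 z) else 0)"

definition tower :: "nat \<Rightarrow> (bool \<Rightarrow> bool \<Rightarrow> complex) \<Rightarrow> ((bool list \<Rightarrow> complex) \<times> (bool list \<Rightarrow> complex)) set" where
  "tower k U = Hsp k \<times> (Pprime k U True ` Hsp k)"

definition tinner :: "nat \<Rightarrow> (bool list \<Rightarrow> complex) \<times> (bool list \<Rightarrow> complex)
      \<Rightarrow> (bool list \<Rightarrow> complex) \<times> (bool list \<Rightarrow> complex) \<Rightarrow> complex" where
  "tinner k \<Phi> \<Psi> = hinner k (fst \<Phi>) (fst \<Psi>) + hinner k (snd \<Phi>) (snd \<Psi>)"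

definition dsum :: "(('a \<Rightarrow> complex) \<Rightarrow> ('a \<Rightarrow> complex)) \<Rightarrow> (('a \<Rightarrow> complex) \<Rightarrow> ('a \<Rightarrow> complex))
      \<Rightarrow> ('a \<Rightarrow> complex) \<times> ('a \<Rightarrow> complex) \<Rightarrow> ('a \<Rightarrow> complex) \<times> ('a \<Rightarrow> complex)" where
  "dsum A B \<Phi> = (A (fst \<Phi>), B (snd \<Phi>))"

definition Utilde :: "nat \<Rightarrow> (bool \<Rightarrow> bool \<Rightarrow> complex) \<Rightarrow> real
      \<Rightarrow> (bool list \<Rightarrow> complex) \<times> (bool list \<Rightarrow> complex) \<Rightarrow> (bool list \<Rightarrow> complex) \<times> (bool list \<Rightarrow> complex)" where
  "Utilde k U \<theta> \<Phi> =
     ((\<lambda>z. sigma k (Ubar k U (Pprime k U True (snd \<Phi>))) z + Ubar k U (Pcyl [False] (fst \<Phi>)) z),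
      (\<lambda>z. exp (\<i> * of_real \<theta>) * Ubar k U (Pcyl [True] (fst \<Phi>)) z))"

text \<open>\<open>V^* A V = B\<close> as operators on the tower space, expressed through the
  defining property of the adjoint: \<open>\<langle>\<Psi>, V^* A V \<Phi>\<rangle> = \<langle>V \<Psi>, A V \<Phi>\<rangle>\<close>.\<close>
definition conj_eq_on_tower ::
  "nat \<Rightarrow> (bool \<Rightarrow> bool \<Rightarrow> complex) \<Rightarrow> (_ \<Rightarrow> _) \<Rightarrow> (_ \<Rightarrow> _) \<Rightarrow> (_ \<Rightarrow> _) \<Rightarrow> bool" where
  "conj_eq_on_tower k U V A B \<longleftrightarrow>
     (\<forall>\<Psi>\<in>tower k U. \<forall>\<Phi>\<in>tower k U. tinner k (V \<Psi>) (A (V \<Phi>)) = tinner k \<Psi> (B \<Phi>))"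

end

theory Submission imports Defs begin

text \<open>Both identities are checked matrix element by matrix element. Three facts do the work.
  First, \<open>Ubar\<^sup>* (Pcyl x) Ubar = PTinv 1 x\<close>, because \<open>Ubar\<close> moves the first tensor factor
  to the end. Second, \<open>sigma\<close> only touches the last two factors, so it commutes with
  \<open>Pcyl x\<close> when \<open>|x| + 2 \<le> k\<close>. Third, the last tensor factor of vectors in the range of
  \<open>sigma Ubar P'\<^sub>1\<close> lies on the line of \<open>U|1\<rangle>\<close>, that of \<open>Ubar (Pcyl [0])\<close> on the orthogonal line
  of \<open>U|0\<rangle>\<close>, and \<open>Pcyl x\<close> does not touch the last factor; hence the cross terms vanish.\<close>

lemma finite_words [simp]: "finite (words n)"
  using finite_lists_length_eq[of "UNIV :: bool set" n] by (simp add: words_def)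

lemma sum_UNIV_bool: "(\<Sum>b\<in>UNIV. f b) = f False + f True"
  by (simp add: UNIV_bool)

lemma words_Suc_Cons: "words (Suc n) = (\<lambda>(b, w). b # w) ` (UNIV \<times> words n)"
  by (auto simp: words_def image_iff length_Suc_conv)

lemma words_Suc_snoc: "words (Suc n) = (\<lambda>(w, b). w @ [b]) ` (words n \<times> UNIV)"
proof -
  have "y = butlast y @ [last y]" if "length y = Suc n" for y :: "bool list"
    using that by (metis append_butlast_last_id list.size(3) nat.distinct(1))
  then show ?thesis by (force simp: words_def image_iff)
qed

lemma sum_words_Suc_Cons: "(\<Sum>y\<in>words (Suc n). f y) = (\<Sum>b\<in>UNIV. \<Sum>w\<in>words n. f (b # w))"
  by (simp add: words_Suc_Cons sum.reindex inj_on_def sum.cartesian_product split_def)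

lemma sum_words_Suc_snoc: "(\<Sum>y\<in>words (Suc n). f y) = (\<Sum>w\<in>words n. \<Sum>b\<in>UNIV. f (w @ [b]))"
  by (simp add: words_Suc_snoc sum.reindex inj_on_def sum.cartesian_product split_def)

lemma unitary2_columns_orthonormal:
  "unitary2 U \<Longrightarrow> cnj (U False i) * U False j + cnj (U True i) * U True j = (if i = j then 1 else 0)"
  unfolding unitary2_def by (metis sum_UNIV_bool)

lemma cnj_mult_self_eq_1: "cmod c = 1 \<Longrightarrow> cnj c * c = 1"
  by (metis complex_norm_square mult.commute of_real_1 power_one)

lemma Ubar_eq:
  assumes "0 < k"
  shows "Ubar k U \<phi> z =
    (if length z = k then U (last z) False * \<phi> (False # butlast z) + U (last z) True * \<phi> (True # butlast z)
     else 0)"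
proof (cases "length z = k")
  case True
  obtain n where k: "k = Suc n" using assms by (cases k) auto
  have "butlast z \<in> words n" using True k by (simp add: words_def)
  moreover have "Ubar k U \<phi> z = (\<Sum>b\<in>UNIV. \<Sum>w\<in>words n. if butlast z = w then U (last z) b * \<phi> (b # w) else 0)"
    unfolding Ubar_def Ubar_ent_def k sum_words_Suc_Cons
    by (intro sum.cong refl) (use True k in \<open>auto simp: words_def\<close>)
  ultimately show ?thesis using True by (simp add: sum.delta sum_UNIV_bool)
qed (simp add: Ubar_def Ubar_ent_def)

lemma Ubar_adj_eq:
  assumes "0 < k"
  shows "Ubar_adj k U \<phi> y =
    (if length y = k then cnj (U False (hd y)) * \<phi> (tl y @ [False]) + cnj (U True (hd y)) * \<phi> (tl y @ [True])
     else 0)"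
proof (cases "length y = k")
  case True
  obtain n where k: "k = Suc n" using assms by (cases k) auto
  have "tl y \<in> words n" using True k by (simp add: words_def)
  moreover have "Ubar_adj k U \<phi> y = (\<Sum>b\<in>UNIV. \<Sum>w\<in>words n. if w = tl y then cnj (U b (hd y)) * \<phi> (w @ [b]) else 0)"
    unfolding Ubar_adj_def Ubar_ent_def k sum_words_Suc_snoc
    by (subst sum.swap) (intro sum.cong refl, use True k in \<open>auto simp: words_def\<close>)
  ultimately show ?thesis using True by (simp add: sum.delta sum_UNIV_bool)
qed (simp add: Ubar_adj_def Ubar_ent_def)

lemma Ubar_in_Hsp: "Ubar k U \<phi> \<in> Hsp k"
  by (simp add: Hsp_def Ubar_def Ubar_ent_def)

lemma Ubar_adj_in_Hsp: "Ubar_adj k U \<phi> \<in> Hsp k"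
  by (simp add: Hsp_def Ubar_adj_def Ubar_ent_def)

lemma Pcyl_in_Hsp: "\<phi> \<in> Hsp k \<Longrightarrow> Pcyl w \<phi> \<in> Hsp k"
  by (simp add: Hsp_def Pcyl_def)

lemma Pprime_in_Hsp: "Pprime k U j \<phi> \<in> Hsp k"
  by (simp add: Pprime_def Ubar_in_Hsp)

lemma Ubar_adj_Ubar:
  assumes "0 < k" "unitary2 U" "\<phi> \<in> Hsp k"
  shows "Ubar_adj k U (Ubar k U \<phi>) = \<phi>"
proof
  fix y
  show "Ubar_adj k U (Ubar k U \<phi>) y = \<phi> y"
  proof (cases "length y = k")
    case True
    then obtain h t where y: "y = h # t" using assms(1) by (cases y) auto
    have "Ubar_adj k U (Ubar k U \<phi>) y =
        \<phi> (False # t) * (cnj (U False h) * U False False + cnj (U True h) * U True False)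
      + \<phi> (True # t) * (cnj (U False h) * U False True + cnj (U True h) * U True True)"
      using True assms(1) y by (simp add: Ubar_adj_eq Ubar_eq algebra_simps)
    then show ?thesis using unitary2_columns_orthonormal[OF assms(2)] y by (cases h) auto
  qed (use assms in \<open>simp add: Ubar_adj_eq Hsp_def\<close>)
qed

lemma PTinv_Suc_0: "PTinv (Suc 0) x \<phi> = (\<lambda>z. if z \<noteq> [] \<and> take (length x) (tl z) = x then \<phi> z else 0)"
proof
  fix z
  have "words (Suc 0) = {[False], [True]}" by (auto simp: words_def length_Suc_conv)
  then show "PTinv (Suc 0) x \<phi> z = (if z \<noteq> [] \<and> take (length x) (tl z) = x then \<phi> z else 0)"
    by (cases z) (auto simp: PTinv_def Pcyl_def)
qed

lemma Ubar_adj_Pcyl: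
  assumes "length x < k"
  shows "Ubar_adj k U (Pcyl x \<phi>) = PTinv 1 x (Ubar_adj k U \<phi>)"
proof
  fix y
  show "Ubar_adj k U (Pcyl x \<phi>) y = PTinv 1 x (Ubar_adj k U \<phi>) y"
  proof (cases "length y = k")
    case True
    then obtain h t where "y = h # t" using assms by (cases y) auto
    then show ?thesis using True assms by (simp add: Ubar_adj_eq PTinv_Suc_0 Pcyl_def)
  qed (use assms in \<open>simp add: Ubar_adj_eq PTinv_Suc_0\<close>)
qed

lemma Pcyl_PTinv_Pcyl: "Pcyl w (PTinv n x (Pcyl w \<phi>)) = Pcyl w (PTinv n x \<phi>)"
  by (auto simp: PTinv_def Pcyl_def)

lemma hinner_commute: "hinner k \<phi> \<psi> = cnj (hinner k \<psi> \<phi>)"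
  by (simp add: hinner_def mult.commute)

lemma hinner_Ubar_right: "hinner k \<phi> (Ubar k U \<psi>) = hinner k (Ubar_adj k U \<phi>) \<psi>"
proof -
  have "hinner k \<phi> (Ubar k U \<psi>) = (\<Sum>z\<in>words k. \<Sum>y\<in>words k. cnj (\<phi> z) * (Ubar_ent k U z y * \<psi> y))"
    by (simp add: hinner_def Ubar_def sum_distrib_left)
  also have "\<dots> = (\<Sum>y\<in>words k. \<Sum>z\<in>words k. cnj (\<phi> z) * (Ubar_ent k U z y * \<psi> y))"
    by (rule sum.swap)
  also have "\<dots> = hinner k (Ubar_adj k U \<phi>) \<psi>"
    by (simp add: hinner_def Ubar_adj_def sum_distrib_left sum_distrib_right mult_ac)
  finally show ?thesis .
qed

lemma hinner_Ubar_left: "hinner k (Ubar k U \<phi>) \<psi> = hinner k \<phi> (Ubar_adj k U \<psi>)"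
  by (metis hinner_Ubar_right hinner_commute)

lemma hinner_Pcyl: "hinner k \<phi> (Pcyl w \<psi>) = hinner k (Pcyl w \<phi>) \<psi>"
  unfolding hinner_def Pcyl_def by (intro sum.cong) auto

lemma hinner_add_left: "hinner k (\<lambda>z. f z + g z) h = hinner k f h + hinner k g h"
  by (simp add: hinner_def sum.distrib algebra_simps)

lemma hinner_add_right: "hinner k h (\<lambda>z. f z + g z) = hinner k h f + hinner k h g"
  by (simp add: hinner_def sum.distrib algebra_simps)

lemma hinner_zero_right: "hinner k h (\<lambda>z. 0) = 0"
  by (simp add: hinner_def)

lemma hinner_scaleC: "hinner k (\<lambda>z. c * f z) (\<lambda>z. c * g z) = cnj c * c * hinner k f g"
  by (simp add: hinner_def sum_distrib_left mult_ac)

lemma hinner_Ubar_Pcyl_Ubar: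
  assumes "0 < k" "unitary2 U" "length x < k" "\<psi> \<in> Hsp k"
  shows "hinner k (Ubar k U \<phi>) (Pcyl x (Ubar k U \<psi>)) = hinner k \<phi> (PTinv 1 x \<psi>)"
  using assms by (simp add: hinner_Ubar_left Ubar_adj_Pcyl Ubar_adj_Ubar)

lemma hinner_Ubar_Pcyl_Ubar_Pcyl:
  assumes "0 < k" "unitary2 U" "length x < k" "\<phi> \<in> Hsp k"
  shows "hinner k (Ubar k U (Pcyl [j] \<psi>)) (Pcyl x (Ubar k U (Pcyl [j] \<phi>))) =
    hinner k \<psi> (Pcyl [j] (PTinv 1 x \<phi>))"
proof -
  have "hinner k (Ubar k U (Pcyl [j] \<psi>)) (Pcyl x (Ubar k U (Pcyl [j] \<phi>))) =
      hinner k (Pcyl [j] \<psi>) (PTinv 1 x (Pcyl [j] \<phi>))"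
    using assms by (simp add: hinner_Ubar_Pcyl_Ubar Pcyl_in_Hsp)
  also have "\<dots> = hinner k \<psi> (Pcyl [j] (PTinv 1 x \<phi>))"
    by (metis hinner_Pcyl Pcyl_PTinv_Pcyl)
  finally show ?thesis .
qed

lemma Pcyl_add: "Pcyl w (\<lambda>z. f z + g z) = (\<lambda>z. Pcyl w f z + Pcyl w g z)"
  by (auto simp: Pcyl_def)

lemma Pcyl_Pcyl: "Pcyl w (Pcyl w \<phi>) = Pcyl w \<phi>"
  by (auto simp: Pcyl_def)

lemma Pcyl_scaleC: "Pcyl w (\<lambda>z. c * f z) = (\<lambda>z. c * Pcyl w f z)"
  by (auto simp: Pcyl_def)

lemma Pprime_scaleC: "Pprime k U j (\<lambda>z. c * f z) = (\<lambda>z. c * Pprime k U j f z)"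
  unfolding Pprime_def Ubar_def Ubar_adj_def Pcyl_def
  by (auto simp: sum_distrib_left mult_ac intro!: sum.cong)

lemma hinner_Pprime: "hinner k (Pprime k U j \<phi>) \<psi> = hinner k \<phi> (Pprime k U j \<psi>)"
  by (simp add: Pprime_def hinner_Ubar_left hinner_Ubar_right hinner_Pcyl)

lemma Pprime_Pprime:
  assumes "0 < k" "unitary2 U"
  shows "Pprime k U j (Pprime k U j \<phi>) = Pprime k U j \<phi>"
  unfolding Pprime_def
  by (simp add: Ubar_adj_Ubar[OF assms Pcyl_in_Hsp[OF Ubar_adj_in_Hsp]] Pcyl_Pcyl)

lemma Pprime_Ubar_Pcyl:
  assumes "0 < k" "unitary2 U" "\<phi> \<in> Hsp k"
  shows "Pprime k U j (Ubar k U (Pcyl [j] \<phi>)) = Ubar k U (Pcyl [j] \<phi>)"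
  unfolding Pprime_def using assms
  by (simp add: Ubar_adj_Ubar Pcyl_in_Hsp Pcyl_Pcyl)

lemma tower_memD:
  assumes "0 < k" "unitary2 U" "(\<phi>\<^sub>0, \<phi>\<^sub>1) \<in> tower k U"
  shows "\<phi>\<^sub>0 \<in> Hsp k" "\<phi>\<^sub>1 \<in> Hsp k" "Pprime k U True \<phi>\<^sub>1 = \<phi>\<^sub>1"
  using assms by (auto simp: tower_def Pprime_in_Hsp Pprime_Pprime)

lemma Utilde_on_tower:
  assumes "0 < k" "unitary2 U" "(\<phi>\<^sub>0, \<phi>\<^sub>1) \<in> tower k U"
  shows "Utilde k U \<theta> (\<phi>\<^sub>0, \<phi>\<^sub>1) =
    (\<lambda>z. sigma k (Ubar k U \<phi>\<^sub>1) z + Ubar k U (Pcyl [False] \<phi>\<^sub>0) z,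
     \<lambda>z. exp (\<i> * of_real \<theta>) * Ubar k U (Pcyl [True] \<phi>\<^sub>0) z)"
  using tower_memD(3)[OF assms] by (simp add: Utilde_def)

lemma swap_last2_append [simp]: "swap_last2 (a @ [p, q]) = a @ [q, p]"
  by (simp add: swap_last2_def butlast_append)

lemma length_ge_2_cases:
  assumes "2 \<le> length z"
  obtains a p q where "z = a @ [p, q]"
proof -
  obtain ys q where z: "z = ys @ [q]" using assms by (cases z rule: rev_exhaust) auto
  then obtain a p where "ys = a @ [p]" using assms by (cases ys rule: rev_exhaust) auto
  then show ?thesis using z that by auto
qed

lemma hinner_sigma:
  assumes "2 \<le> k"
  shows "hinner k (sigma k \<phi>) (sigma k \<psi>) = hinner k \<phi> \<psi>"
proof -
  have swap: "swap_last2 (swap_last2 z) = z" "length (swap_last2 z) = length z" if "2 \<le> length z" for z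
    using that by (auto elim: length_ge_2_cases)
  have "hinner k (sigma k \<phi>) (sigma k \<psi>) = (\<Sum>z\<in>words k. cnj (\<phi> (swap_last2 z)) * \<psi> (swap_last2 z))"
    unfolding hinner_def sigma_def by (intro sum.cong) (auto simp: words_def)
  also have "\<dots> = hinner k \<phi> \<psi>"
    unfolding hinner_def
    by (rule sum.reindex_bij_witness[where i = swap_last2 and j = swap_last2])
       (use assms swap in \<open>auto simp: words_def\<close>)
  finally show ?thesis .
qed

lemma Pcyl_sigma:
  assumes "length x + 2 \<le> k"
  shows "Pcyl x (sigma k \<phi>) = sigma k (Pcyl x \<phi>)"
proof
  fix z
  show "Pcyl x (sigma k \<phi>) z = sigma k (Pcyl x \<phi>) z"
  proof (cases "length z = k")
    case True
    with assms have "2 \<le> length z" by simp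
    then obtain a p q where z: "z = a @ [p, q]" by (rule length_ge_2_cases)
    then have "length x \<le> length a" using True assms by simp
    then show ?thesis using True z by (simp add: Pcyl_def sigma_def)
  qed (simp add: Pcyl_def sigma_def)
qed

text \<open>\<open>last_factor_in_column k U j f\<close>: \<open>f\<close> lies in \<open>(\<complex>\<^sup>2)\<^sup>\<otimes>\<^sup>(\<^sup>k\<^sup>-\<^sup>1\<^sup>) \<otimes> \<complex> U|j\<rangle>\<close>.\<close>

definition last_factor_in_column ::
  "nat \<Rightarrow> (bool \<Rightarrow> bool \<Rightarrow> complex) \<Rightarrow> bool \<Rightarrow> (bool list \<Rightarrow> complex) \<Rightarrow> bool" where
  "last_factor_in_column k U j f \<longleftrightarrow>
     (\<exists>g. f = (\<lambda>z. if length z = k then U (last z) j * g (butlast z) else 0))"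

lemma last_factor_in_columnE:
  assumes "last_factor_in_column k U j f"
  obtains g where "f = (\<lambda>z. if length z = k then U (last z) j * g (butlast z) else 0)"
  using assms unfolding last_factor_in_column_def by blast

lemma hinner_last_factor_in_column_orthogonal:
  assumes "0 < k" "unitary2 U" "j \<noteq> j'"
    and "last_factor_in_column k U j f" "last_factor_in_column k U j' f'"
  shows "hinner k f f' = 0"
proof -
  obtain n where k: "k = Suc n" using assms by (cases k) auto
  obtain g g' where
    f: "f = (\<lambda>z. if length z = k then U (last z) j * g (butlast z) else 0)" and
    f': "f' = (\<lambda>z. if length z = k then U (last z) j' * g' (butlast z) else 0)"
    using assms(4,5) by (elim last_factor_in_columnE)
  have "hinner k f f' =
      (\<Sum>w\<in>words n. cnj (g w) * g' w * (cnj (U False j) * U False j' + cnj (U True j) * U True j'))"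
    unfolding hinner_def k sum_words_Suc_snoc sum_UNIV_bool
    by (intro sum.cong refl) (simp add: f f' k words_def algebra_simps)
  also have "\<dots> = 0" using unitary2_columns_orthonormal[OF assms(2), of j j'] assms(3) by simp
  finally show ?thesis .
qed

lemma last_factor_in_column_Pcyl:
  assumes "length x < k" "last_factor_in_column k U j f"
  shows "last_factor_in_column k U j (Pcyl x f)"
proof -
  obtain g where g: "f = (\<lambda>z. if length z = k then U (last z) j * g (butlast z) else 0)"
    using assms(2) by (elim last_factor_in_columnE)
  have "Pcyl x f = (\<lambda>z. if length z = k then U (last z) j * Pcyl x g (butlast z) else 0)"
    using assms(1) by (auto simp: g Pcyl_def take_butlast)
  then show ?thesis unfolding last_factor_in_column_def by blast
qed

lemma last_factor_in_column_Ubar_Pcyl: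
  assumes "0 < k"
  shows "last_factor_in_column k U j (Ubar k U (Pcyl [j] \<phi>))"
proof -
  have "Ubar k U (Pcyl [j] \<phi>) = (\<lambda>z. if length z = k then U (last z) j * \<phi> (j # butlast z) else 0)"
    by (rule ext) (cases j; simp add: Ubar_eq[OF assms] Pcyl_def)
  then show ?thesis unfolding last_factor_in_column_def by (intro exI[of _ "\<lambda>w. \<phi> (j # w)"])
qed

text \<open>\<open>Ubar\<close> pushes the last factor to the second-to-last position, and \<open>sigma\<close> brings it back.\<close>

lemma last_factor_in_column_sigma_Ubar:
  assumes "3 \<le> k" "last_factor_in_column k U j f"
  shows "last_factor_in_column k U j (sigma k (Ubar k U f))"
proof -
  obtain g where g: "f = (\<lambda>z. if length z = k then U (last z) j * g (butlast z) else 0)"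
    using assms(2) by (elim last_factor_in_columnE)
  define G where "G w = U (last w) False * g (False # butlast w) + U (last w) True * g (True # butlast w)" for w
  have "sigma k (Ubar k U f) = (\<lambda>z. if length z = k then U (last z) j * G (butlast z) else 0)"
  proof
    fix z
    show "sigma k (Ubar k U f) z = (if length z = k then U (last z) j * G (butlast z) else 0)"
    proof (cases "length z = k")
      case True
      with assms have "2 \<le> length z" by simp
      then obtain a p q where "z = a @ [p, q]" by (rule length_ge_2_cases)
      then show ?thesis using True assms(1)
        by (simp add: sigma_def Ubar_eq g G_def butlast_append algebra_simps)
    qed (simp add: sigma_def)
  qed
  then show ?thesis unfolding last_factor_in_column_def by blast
qed

lemma last_factor_in_column_Pprime:
  assumes "0 < k"
  shows "last_factor_in_column k U j (Pprime k U j \<phi>)"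
  unfolding Pprime_def by (rule last_factor_in_column_Ubar_Pcyl[OF assms])

lemma Utilde_conj_Pcyl_oplus_0:
  assumes "3 \<le> k" "unitary2 U" "length x + 2 \<le> k"
  shows "conj_eq_on_tower k U (Utilde k U \<theta>)
           (dsum (Pcyl x) (\<lambda>\<phi> _. 0))
           (dsum (\<lambda>\<phi>. Pcyl [False] (PTinv 1 x \<phi>)) (\<lambda>\<phi>. Pprime k U True (PTinv 1 x \<phi>)))"
  unfolding conj_eq_on_tower_def
proof (intro ballI)
  have k: "0 < k" "2 \<le> k" "length x < k" using assms by auto
  fix \<Psi> \<Phi> assume "\<Psi> \<in> tower k U" "\<Phi> \<in> tower k U"
  moreover obtain \<psi>\<^sub>0 \<psi>\<^sub>1 \<phi>\<^sub>0 \<phi>\<^sub>1 where \<Psi>: "\<Psi> = (\<psi>\<^sub>0, \<psi>\<^sub>1)" and \<Phi>: "\<Phi> = (\<phi>\<^sub>0, \<phi>\<^sub>1)" by fastforce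
  ultimately have \<Psi>_tower: "(\<psi>\<^sub>0, \<psi>\<^sub>1) \<in> tower k U" and \<Phi>_tower: "(\<phi>\<^sub>0, \<phi>\<^sub>1) \<in> tower k U" by simp_all
  note \<psi> = tower_memD[OF k(1) assms(2) \<Psi>_tower] and \<phi> = tower_memD[OF k(1) assms(2) \<Phi>_tower]
  define a where "a = sigma k (Ubar k U \<psi>\<^sub>1)"
  define b where "b = Ubar k U (Pcyl [False] \<psi>\<^sub>0)"
  define c where "c = sigma k (Ubar k U \<phi>\<^sub>1)"
  define d where "d = Ubar k U (Pcyl [False] \<phi>\<^sub>0)"
  have columns: "last_factor_in_column k U True a" "last_factor_in_column k U True c"
      "last_factor_in_column k U False b" "last_factor_in_column k U False d"
    unfolding a_def b_def c_def d_def
    using last_factor_in_column_sigma_Ubar[OF assms(1) last_factor_in_column_Pprime[OF k(1)]]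
      \<psi>(3) \<phi>(3) last_factor_in_column_Ubar_Pcyl[OF k(1)] by metis+
  have "hinner k a (Pcyl x c) = hinner k \<psi>\<^sub>1 (PTinv 1 x \<phi>\<^sub>1)"
    using k assms \<phi>(2) by (simp add: a_def c_def Pcyl_sigma hinner_sigma hinner_Ubar_Pcyl_Ubar)
  also have "\<dots> = hinner k \<psi>\<^sub>1 (Pprime k U True (PTinv 1 x \<phi>\<^sub>1))"
    by (metis hinner_Pprime \<psi>(3))
  finally have twisted: "hinner k a (Pcyl x c) = hinner k \<psi>\<^sub>1 (Pprime k U True (PTinv 1 x \<phi>\<^sub>1))" .
  have cross: "hinner k a (Pcyl x d) = 0" "hinner k b (Pcyl x c) = 0"
    using hinner_last_factor_in_column_orthogonal[OF k(1) assms(2)] last_factor_in_column_Pcyl[OF k(3)]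
      columns by blast+
  have shifted: "hinner k b (Pcyl x d) = hinner k \<psi>\<^sub>0 (Pcyl [False] (PTinv 1 x \<phi>\<^sub>0))"
    unfolding b_def d_def using k assms \<phi>(1) by (simp add: hinner_Ubar_Pcyl_Ubar_Pcyl)
  show "tinner k (Utilde k U \<theta> \<Psi>) (dsum (Pcyl x) (\<lambda>\<phi> _. 0) (Utilde k U \<theta> \<Phi>)) =
        tinner k \<Psi> (dsum (\<lambda>\<phi>. Pcyl [False] (PTinv 1 x \<phi>)) (\<lambda>\<phi>. Pprime k U True (PTinv 1 x \<phi>)) \<Phi>)"
    unfolding \<Psi> \<Phi> Utilde_on_tower[OF k(1) assms(2) \<Psi>_tower] Utilde_on_tower[OF k(1) assms(2) \<Phi>_tower]
    by (simp add: tinner_def dsum_def Pcyl_add hinner_add_left hinner_add_right hinner_zero_right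
        a_def[symmetric] b_def[symmetric] c_def[symmetric] d_def[symmetric] twisted cross shifted)
qed

lemma Utilde_conj_0_oplus_Pprime_Pcyl:
  assumes "0 < k" "unitary2 U" "length x < k"
  shows "conj_eq_on_tower k U (Utilde k U \<theta>)
           (dsum (\<lambda>\<phi> _. 0) (\<lambda>\<phi>. Pprime k U True (Pcyl x \<phi>)))
           (dsum (\<lambda>\<phi>. Pcyl [True] (PTinv 1 x \<phi>)) (\<lambda>\<phi> _. 0))"
  unfolding conj_eq_on_tower_def
proof (intro ballI)
  fix \<Psi> \<Phi> assume "\<Psi> \<in> tower k U" "\<Phi> \<in> tower k U"
  moreover obtain \<psi>\<^sub>0 \<psi>\<^sub>1 \<phi>\<^sub>0 \<phi>\<^sub>1 where \<Psi>: "\<Psi> = (\<psi>\<^sub>0, \<psi>\<^sub>1)" and \<Phi>: "\<Phi> = (\<phi>\<^sub>0, \<phi>\<^sub>1)" by fastforce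
  ultimately have \<Psi>_tower: "(\<psi>\<^sub>0, \<psi>\<^sub>1) \<in> tower k U" and \<Phi>_tower: "(\<phi>\<^sub>0, \<phi>\<^sub>1) \<in> tower k U" by simp_all
  have \<psi>\<^sub>0: "\<psi>\<^sub>0 \<in> Hsp k" and \<phi>\<^sub>0: "\<phi>\<^sub>0 \<in> Hsp k"
    using tower_memD(1)[OF assms(1,2)] \<Psi>_tower \<Phi>_tower by blast+
  have "hinner k (Ubar k U (Pcyl [True] \<psi>\<^sub>0)) (Pprime k U True (Pcyl x (Ubar k U (Pcyl [True] \<phi>\<^sub>0))))
      = hinner k (Ubar k U (Pcyl [True] \<psi>\<^sub>0)) (Pcyl x (Ubar k U (Pcyl [True] \<phi>\<^sub>0)))"
    by (metis hinner_Pprime Pprime_Ubar_Pcyl[OF assms(1,2) \<psi>\<^sub>0])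
  also have "\<dots> = hinner k \<psi>\<^sub>0 (Pcyl [True] (PTinv 1 x \<phi>\<^sub>0))"
    using assms \<phi>\<^sub>0 by (rule hinner_Ubar_Pcyl_Ubar_Pcyl)
  finally have second_components:
    "hinner k (Ubar k U (Pcyl [True] \<psi>\<^sub>0)) (Pprime k U True (Pcyl x (Ubar k U (Pcyl [True] \<phi>\<^sub>0))))
     = hinner k \<psi>\<^sub>0 (Pcyl [True] (PTinv 1 x \<phi>\<^sub>0))" .
  have phase: "cnj (exp (\<i> * of_real \<theta>)) * exp (\<i> * of_real \<theta>) = 1"
    by (simp add: cnj_mult_self_eq_1)
  show "tinner k (Utilde k U \<theta> \<Psi>) (dsum (\<lambda>\<phi> _. 0) (\<lambda>\<phi>. Pprime k U True (Pcyl x \<phi>)) (Utilde k U \<theta> \<Phi>)) =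
        tinner k \<Psi> (dsum (\<lambda>\<phi>. Pcyl [True] (PTinv 1 x \<phi>)) (\<lambda>\<phi> _. 0) \<Phi>)"
    unfolding \<Psi> \<Phi> Utilde_on_tower[OF assms(1,2) \<Psi>_tower] Utilde_on_tower[OF assms(1,2) \<Phi>_tower]
    by (simp add: tinner_def dsum_def Pcyl_scaleC Pprime_scaleC hinner_scaleC hinner_zero_right
        second_components phase)
qed

theorem proposition7:
  fixes k :: nat and U :: "bool \<Rightarrow> bool \<Rightarrow> complex" and \<theta> :: real and x :: "bool list"
  assumes "k \<ge> 3"
    and "unitary2 U"
    and "\<forall>i j. cmod (U i j) = 1 / sqrt 2"
    and "length x < k - 1"
  shows "conj_eq_on_tower k U (Utilde k U \<theta>)
           (dsum (Pcyl x) (\<lambda>\<phi> _. 0))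
           (dsum (\<lambda>\<phi>. Pcyl [False] (PTinv 1 x \<phi>)) (\<lambda>\<phi>. Pprime k U True (PTinv 1 x \<phi>)))
       \<and> conj_eq_on_tower k U (Utilde k U \<theta>)
           (dsum (\<lambda>\<phi> _. 0) (\<lambda>\<phi>. Pprime k U True (Pcyl x \<phi>)))
           (dsum (\<lambda>\<phi>. Pcyl [True] (PTinv 1 x \<phi>)) (\<lambda>\<phi> _. 0))"
proof
  show "conj_eq_on_tower k U (Utilde k U \<theta>)
          (dsum (Pcyl x) (\<lambda>\<phi> _. 0))
          (dsum (\<lambda>\<phi>. Pcyl [False] (PTinv 1 x \<phi>)) (\<lambda>\<phi>. Pprime k U True (PTinv 1 x \<phi>)))"
    using assms(1,2,4) by (intro Utilde_conj_Pcyl_oplus_0) auto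
  show "conj_eq_on_tower k U (Utilde k U \<theta>)
          (dsum (\<lambda>\<phi> _. 0) (\<lambda>\<phi>. Pprime k U True (Pcyl x \<phi>)))
          (dsum (\<lambda>\<phi>. Pcyl [True] (PTinv 1 x \<phi>)) (\<lambda>\<phi> _. 0))"
    using assms(1,2,4) by (intro Utilde_conj_0_oplus_Pprime_Pcyl) auto
qed

end
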